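(* Let $G$ be a $4$-regular graph on $n\ge 7$ vertices and let $G'$ be the labeled complete graph on $V(G)$ whose $+$ edges are exactly the edges of $G$. Let $H$ be the labeled complete graph obtained from $G'$ by adding, for every $3$-set $\{u,v,w\}\subseteq V(G')$, a new set $C_{uvw}$ of $7$ vertices, where all edges within $C_{uvw}$ are $+$, all edges from $C_{uvw}$ to $u,v,w$ are $+$, and all other edges incident to $C_{uvw}$ are $-$. Assign tolerance $t_u=7\left(\binom{n-1}{2}-1\right)+2$ to each $u\in V(G')$ and $t_v=3$ to each $v\in V(H)\setminus V(G')$. Then $H$ has a clustering in which every vertex $v$ has at most $t_v$ incident errors if and only if $V(G)$ can be partitioned into sets each of which induces a triangle in $G$.
   Context: A clustering is a partition of the vertex set. An error at a vertex $v$ is an incident edge that is a $+$ edge between different clusters or a $-$ edge within a cluster. *)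

theory Defs
  imports "HOL-Library.Disjoint_Sets"
begin

(* A labeled complete graph on vertex set W is given by a symmetric relation
   Plus: a pair of distinct vertices u v is a + edge iff Plus u v, otherwise a - edge. *)

definition same_cluster :: "'v set set \<Rightarrow> 'v \<Rightarrow> 'v \<Rightarrow> bool" where
  "same_cluster C u v \<longleftrightarrow> (\<exists>B\<in>C. u \<in> B \<and> v \<in> B)"

definition errors_at :: "'v set \<Rightarrow> ('v \<Rightarrow> 'v \<Rightarrow> bool) \<Rightarrow> 'v set set \<Rightarrow> 'v \<Rightarrow> nat" where
  "errors_at W Plus C v = card {u \<in> W. u \<noteq> v \<and>
      ((Plus u v \<and> \<not> same_cluster C u v) \<or> (\<not> Plus u v \<and> same_cluster C u v))}"

definition has_tolerant_clustering ::
  "'v set \<Rightarrow> ('v \<Rightarrow> 'v \<Rightarrow> bool) \<Rightarrow> ('v \<Rightarrow> nat) \<Rightarrow> bool" where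
  "has_tolerant_clustering W Plus t \<longleftrightarrow>
     (\<exists>C. partition_on W C \<and> (\<forall>v\<in>W. errors_at W Plus C v \<le> t v))"

definition H_vertices :: "'a set \<Rightarrow> ('a + ('a set \<times> nat)) set" where
  "H_vertices V = Inl ` V \<union> {Inr (T, i) | T i. T \<subseteq> V \<and> card T = 3 \<and> i < 7}"

fun H_plus :: "('a \<Rightarrow> 'a \<Rightarrow> bool) \<Rightarrow> ('a + ('a set \<times> nat)) \<Rightarrow> ('a + ('a set \<times> nat)) \<Rightarrow> bool" where
  "H_plus E (Inl u) (Inl v) = E u v"
| "H_plus E (Inr (T, i)) (Inr (T', j)) = (T = T')"
| "H_plus E (Inr (T, i)) (Inl u) = (u \<in> T)"
| "H_plus E (Inl u) (Inr (T, i)) = (u \<in> T)"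

fun H_tol :: "nat \<Rightarrow> ('a + ('a set \<times> nat)) \<Rightarrow> nat" where
  "H_tol n (Inl u) = 7 * ((n - 1 choose 2) - 1) + 2"
| "H_tol n (Inr x) = 3"

definition triangle_partition :: "'a set \<Rightarrow> ('a \<Rightarrow> 'a \<Rightarrow> bool) \<Rightarrow> bool" where
  "triangle_partition V E \<longleftrightarrow>
     (\<exists>P. partition_on V P \<and>
          (\<forall>B\<in>P. card B = 3 \<and> (\<forall>x\<in>B. \<forall>y\<in>B. x \<noteq> y \<longrightarrow> E x y)))"

end

theory Submission
  imports Defs
begin

text \<open>
  Write \<open>m = (n - 1 choose 2)\<close> for the number of triples containing a given vertex.
  A gadget vertex tolerates only 3 errors, so a cluster meeting the gadget \<open>C\<^sub>T\<close> contains at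
  least 4 of its 7 vertices, and hence no gadget vertex of any other triple. An original vertex
  \<open>u\<close> has \<open>7m + 4\<close> positive neighbours but tolerates only \<open>7(m - 1) + 2\<close> errors, so its cluster
  contains at least 9 of them. At most 4 are neighbours in \<open>G\<close>, so the cluster meets a gadget
  \<open>C\<^sub>T\<close> with \<open>u \<in> T\<close>; at most 7 of the 9 lie in that gadget, leaving at least 2 neighbours of
  \<open>u\<close> in \<open>T\<close>. Hence the original vertices of every cluster span a triangle of \<open>G\<close>.
  Conversely, clustering each triangle of a partition with its own gadget, and every other gadget
  on its own, costs an original vertex 7 errors for each of the other \<open>m - 1\<close> triples containing
  it plus its 2 neighbours outside its triangle, and costs a gadget vertex at most the 3 vertices
  of its triple.
\<close>

lemma same_cluster_iff_mem:
  assumes "partition_on W C" "K \<in> C" "v \<in> K"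
  shows "same_cluster C u v \<longleftrightarrow> u \<in> K"
  using assms unfolding same_cluster_def partition_on_def disjoint_def by blast

lemma errors_at_eq_card:
  assumes "\<And>u. u \<in> W \<Longrightarrow> same_cluster C u v \<longleftrightarrow> Q u"
  shows "errors_at W Plus C v = card {u \<in> W. u \<noteq> v \<and> (Plus u v \<longleftrightarrow> \<not> Q u)}"
  unfolding errors_at_def using assms by (intro arg_cong[where f = card]) blast

lemma card_le_errors_at:
  assumes "finite W" "partition_on W C" "K \<in> C" "v \<in> K"
    and "A \<subseteq> {u \<in> W. u \<noteq> v \<and> (Plus u v \<longleftrightarrow> u \<notin> K)}"
  shows "card A \<le> errors_at W Plus C v"
proof -
  have "errors_at W Plus C v = card {u \<in> W. u \<noteq> v \<and> (Plus u v \<longleftrightarrow> u \<notin> K)}"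
    using same_cluster_iff_mem[OF assms(2-4)] by (rule errors_at_eq_card)
  then show ?thesis
    using assms(1,5) by (simp add: card_mono)
qed

lemma has_tolerant_clustering_fibers:
  fixes f :: "'v \<Rightarrow> 'k"
  assumes "\<And>v. v \<in> W \<Longrightarrow> card {u \<in> W. u \<noteq> v \<and> (Plus u v \<longleftrightarrow> f u \<noteq> f v)} \<le> t v"
  shows "has_tolerant_clustering W Plus t"
proof -
  define C where "C = (\<lambda>k. {x \<in> W. f x = k}) ` f ` W"
  have "partition_on W C"
    unfolding C_def partition_on_def disjoint_def by auto
  moreover have "errors_at W Plus C v \<le> t v" if "v \<in> W" for v
  proof -
    have "same_cluster C u v \<longleftrightarrow> f u = f v" if "u \<in> W" for u
      using \<open>v \<in> W\<close> that unfolding C_def same_cluster_def by auto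
    then show ?thesis
      using assms[OF \<open>v \<in> W\<close>] by (subst errors_at_eq_card) auto
  qed
  ultimately show ?thesis
    unfolding has_tolerant_clustering_def by blast
qed

lemma card_subsets_containing:
  assumes "finite V" "u \<in> V"
  shows "card {T. T \<subseteq> V \<and> card T = Suc k \<and> u \<in> T} = (card V - 1) choose k"
proof -
  have finite_subsets: "finite A" if "A \<subseteq> V - {u}" for A
    using assms(1) that by (meson finite_Diff finite_subset)
  have "bij_betw (insert u) {A. A \<subseteq> V - {u} \<and> card A = k} {T. T \<subseteq> V \<and> card T = Suc k \<and> u \<in> T}"
  proof (rule bij_betw_byWitness[where f' = "\<lambda>T. T - {u}"])
    show "insert u ` {A. A \<subseteq> V - {u} \<and> card A = k} \<subseteq> {T. T \<subseteq> V \<and> card T = Suc k \<and> u \<in> T}"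
      using assms finite_subsets by (auto simp: card_insert_if)
    show "(\<lambda>T. T - {u}) ` {T. T \<subseteq> V \<and> card T = Suc k \<and> u \<in> T} \<subseteq> {A. A \<subseteq> V - {u} \<and> card A = k}"
      using assms by (auto intro: finite_subset[of _ V])
  qed auto
  then have "card {T. T \<subseteq> V \<and> card T = Suc k \<and> u \<in> T} = card {A. A \<subseteq> V - {u} \<and> card A = k}"
    by (simp add: bij_betw_same_card)
  also have "\<dots> = (card V - 1) choose k"
    using assms by (simp add: n_subsets)
  finally show ?thesis .
qed

lemma full_clique_if_min_degree:
  assumes "finite T" "S \<subseteq> T" "s \<in> S" "\<And>x. \<not> E x x"
    and "\<And>w. w \<in> S \<Longrightarrow> card T \<le> Suc (card {x \<in> S. E w x})"
  shows "S = T \<and> (\<forall>a\<in>S. \<forall>b\<in>S. a \<noteq> b \<longrightarrow> E a b)"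
proof -
  have nbrs: "{x \<in> S. E w x} = T - {w}" if "w \<in> S" for w
  proof (rule card_seteq)
    show "{x \<in> S. E w x} \<subseteq> T - {w}"
      using assms(2,4) by blast
    show "card (T - {w}) \<le> card {x \<in> S. E w x}"
      using assms(5)[OF that] that assms(1,2) by (auto simp: card_Diff_singleton)
  qed (use assms(1) in simp)
  have "S = T"
    using nbrs[OF assms(3)] assms(2,3) by blast
  with nbrs show ?thesis
    by blast
qed

definition gadget :: "'a set \<Rightarrow> ('a + 'a set \<times> nat) set" where
  "gadget T = (\<lambda>i. Inr (T, i)) ` {..<7}"

lemma card_gadget: "card (gadget T) = 7"
  by (simp add: gadget_def card_image inj_on_def)

lemma card_UN_gadget: "finite \<T> \<Longrightarrow> card (\<Union>T\<in>\<T>. gadget T) = 7 * card \<T>"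
  by (subst card_UN_disjoint) (auto simp: card_gadget, auto simp: gadget_def)

lemma H_vertices_eq: "H_vertices V = Inl ` V \<union> (\<Union>T\<in>{T. T \<subseteq> V \<and> card T = 3}. gadget T)"
  by (auto simp: H_vertices_def gadget_def)

lemma finite_H_vertices: "finite V \<Longrightarrow> finite (H_vertices V)"
  by (simp add: H_vertices_eq gadget_def)

lemma Inl_mem_H_vertices [simp]: "Inl u \<in> H_vertices V \<longleftrightarrow> u \<in> V"
  by (auto simp: H_vertices_def)

lemma Inr_mem_H_vertices [simp]: "Inr (T, i) \<in> H_vertices V \<longleftrightarrow> T \<subseteq> V \<and> card T = 3 \<and> i < 7"
  by (auto simp: H_vertices_def)

lemma H_plus_Inr_iff:
  "y \<in> H_vertices V \<Longrightarrow> H_plus E y (Inr (T, i)) \<longleftrightarrow> y \<in> gadget T \<union> Inl ` T"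
  by (cases y) (auto simp: H_vertices_def gadget_def)

locale four_regular_graph =
  fixes V :: "'a set" and E :: "'a \<Rightarrow> 'a \<Rightarrow> bool"
  assumes finite_V: "finite V"
    and edge_vertices: "\<And>u v. E u v \<Longrightarrow> u \<in> V \<and> v \<in> V"
    and E_sym: "\<And>u v. E u v \<Longrightarrow> E v u"
    and E_irrefl: "\<And>u. \<not> E u u"
    and degree: "\<And>v. v \<in> V \<Longrightarrow> card {u \<in> V. E v u} = 4"
begin

definition triples :: "'a \<Rightarrow> 'a set set" where
  "triples u = {T. T \<subseteq> V \<and> card T = 3 \<and> u \<in> T}"

lemma finite_triples: "finite (triples u)"
  using finite_V unfolding triples_def by (simp add: finite_subset[of _ "Pow V"])

lemma card_triples: "u \<in> V \<Longrightarrow> card (triples u) = (card V - 1) choose 2"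
  using card_subsets_containing[OF finite_V, of u 2] by (simp add: triples_def numeral_3_eq_3)

lemma card_triples_pos:
  assumes "u \<in> V"
  shows "0 < card (triples u)"
proof -
  have "card (insert u {w \<in> V. E u w}) = 5"
    using assms degree finite_V E_irrefl by simp
  moreover have "insert u {w \<in> V. E u w} \<subseteq> V"
    using assms by blast
  ultimately have "5 \<le> card V"
    by (metis card_mono finite_V)
  then show ?thesis
    using assms by (simp add: card_triples)
qed

lemma H_tol_Inl: "u \<in> V \<Longrightarrow> H_tol (card V) (Inl u) = 7 * (card (triples u) - 1) + 2"
  by (simp add: card_triples)

lemma H_plus_nbhd_Inl:
  assumes "u \<in> V"
  shows "{y \<in> H_vertices V. H_plus E y (Inl u)} = Inl ` {w \<in> V. E u w} \<union> (\<Union>T\<in>triples u. gadget T)"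
  using assms E_sym by (auto simp: H_vertices_def gadget_def triples_def)

lemma card_H_plus_nbhd_Inl:
  assumes "u \<in> V"
  shows "card {y \<in> H_vertices V. H_plus E y (Inl u)} = 7 * card (triples u) + 4"
proof -
  have "card (Inl ` {w \<in> V. E u w} \<union> (\<Union>T\<in>triples u. gadget T)) =
      card (Inl ` {w \<in> V. E u w} :: ('a + 'a set \<times> nat) set) + card (\<Union>T\<in>triples u. gadget T)"
    using finite_V finite_triples by (intro card_Un_disjoint) (auto simp: gadget_def)
  then show ?thesis
    using assms degree finite_triples by (simp add: H_plus_nbhd_Inl card_image card_UN_gadget)
qed

end

subsection \<open>Tolerant clusterings from triangle partitions\<close>

locale triangle_partitioned = four_regular_graph +
  fixes P :: "'a set set"
  assumes partition: "partition_on V P"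
    and triangle: "\<And>B. B \<in> P \<Longrightarrow> card B = 3 \<and> (\<forall>x\<in>B. \<forall>y\<in>B. x \<noteq> y \<longrightarrow> E x y)"
begin

text \<open>Each triangle of \<open>P\<close> is clustered with its own gadget; every other gadget is a cluster on its own.\<close>

definition block_key :: "'a + 'a set \<times> nat \<Rightarrow> 'a set" where
  "block_key = case_sum (\<lambda>u. {w. same_cluster P w u}) fst"

lemma block_key_Inl: "B \<in> P \<Longrightarrow> u \<in> B \<Longrightarrow> block_key (Inl u) = B"
  using same_cluster_iff_mem[OF partition] by (auto simp: block_key_def)

lemma block_key_Inr [simp]: "block_key (Inr (T, i)) = T"
  by (simp add: block_key_def)

lemma blockE:
  assumes "u \<in> V"
  obtains B where "B \<in> P" "u \<in> B"
  using partition assms unfolding partition_on_def by blast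

lemma mem_block_iff: "B \<in> P \<Longrightarrow> B' \<in> P \<Longrightarrow> w \<in> B' \<Longrightarrow> w \<in> B \<longleftrightarrow> B' = B"
  using partition unfolding partition_on_def disjoint_def by blast

lemma card_nbrs_outside_block:
  assumes "B \<in> P" "u \<in> B"
  shows "card ({w \<in> V. E u w} - B) = 2"
proof -
  have "B \<subseteq> V"
    using partition assms(1) unfolding partition_on_def by blast
  then have "{w \<in> V. E u w} \<inter> B = B - {u}"
    using triangle[OF assms(1)] assms(2) E_irrefl by auto
  moreover have "card (B - {u}) = 2"
    using triangle[OF assms(1)] assms(2) by (simp add: card_Diff_singleton)
  moreover have "card ({w \<in> V. E u w} - B) = card {w \<in> V. E u w} - card ({w \<in> V. E u w} \<inter> B)"
    by (rule card_Diff_subset_Int) (simp add: finite_V)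
  ultimately show ?thesis
    using degree \<open>B \<subseteq> V\<close> assms(2) by auto
qed

lemma block_errors_Inl_subset:
  assumes "B \<in> P" "u \<in> B"
  shows "{y \<in> H_vertices V. y \<noteq> Inl u \<and> (H_plus E y (Inl u) \<longleftrightarrow> block_key y \<noteq> B)}
    \<subseteq> Inl ` ({w \<in> V. E u w} - B) \<union> (\<Union>T\<in>triples u - {B}. gadget T)"
proof (intro subsetI, elim CollectE conjE)
  fix y assume y: "y \<in> H_vertices V" "y \<noteq> Inl u" "H_plus E y (Inl u) \<longleftrightarrow> block_key y \<noteq> B"
  show "y \<in> Inl ` ({w \<in> V. E u w} - B) \<union> (\<Union>T\<in>triples u - {B}. gadget T)"
  proof (cases y)
    case (Inl w)
    then obtain B' where B': "B' \<in> P" "w \<in> B'"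
      using blockE y(1) by auto
    then show ?thesis
      using y Inl assms triangle[OF assms(1)] block_key_Inl[OF B'] mem_block_iff[OF assms(1) B'] E_sym
      by auto
  next
    case (Inr z)
    then show ?thesis
      using y assms by (cases z) (auto simp: triples_def gadget_def)
  qed
qed

lemma block_errors_Inl:
  assumes "u \<in> V"
  shows "card {y \<in> H_vertices V. y \<noteq> Inl u \<and> (H_plus E y (Inl u) \<longleftrightarrow> block_key y \<noteq> block_key (Inl u))}
    \<le> H_tol (card V) (Inl u)"
proof -
  obtain B where B: "B \<in> P" "u \<in> B"
    using blockE[OF assms] .
  have "B \<in> triples u"
    using B triangle partition unfolding triples_def partition_on_def by blast
  have "card {y \<in> H_vertices V. y \<noteq> Inl u \<and> (H_plus E y (Inl u) \<longleftrightarrow> block_key y \<noteq> B)}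
      \<le> card (Inl ` ({w \<in> V. E u w} - B) \<union> (\<Union>T\<in>triples u - {B}. gadget T))"
    using block_errors_Inl_subset[OF B] finite_V finite_triples
    by (intro card_mono) (auto simp: gadget_def)
  also have "\<dots> \<le> card (Inl ` ({w \<in> V. E u w} - B) :: ('a + 'a set \<times> nat) set)
      + card (\<Union>T\<in>triples u - {B}. gadget T)"
    by (rule card_Un_le)
  also have "\<dots> = 2 + 7 * (card (triples u) - 1)"
    using card_nbrs_outside_block[OF B] \<open>B \<in> triples u\<close> finite_triples
    by (simp add: card_image card_UN_gadget)
  finally show ?thesis
    using H_tol_Inl[OF assms] block_key_Inl[OF B] by simp
qed

lemma block_errors_Inr:
  assumes "T \<subseteq> V" "card T = 3"
  shows "card {y \<in> H_vertices V. y \<noteq> Inr (T, i) \<and> (H_plus E y (Inr (T, i)) \<longleftrightarrow> block_key y \<noteq> T)} \<le> 3"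
proof -
  have "{y \<in> H_vertices V. y \<noteq> Inr (T, i) \<and> (H_plus E y (Inr (T, i)) \<longleftrightarrow> block_key y \<noteq> T)} \<subseteq> Inl ` T"
  proof (intro subsetI, elim CollectE conjE)
    fix y assume y: "y \<in> H_vertices V" "H_plus E y (Inr (T, i)) \<longleftrightarrow> block_key y \<noteq> T"
    show "y \<in> Inl ` T"
    proof (cases y)
      case (Inl w)
      then obtain B where "B \<in> P" "w \<in> B"
        using blockE y(1) by auto
      then show ?thesis
        using y Inl block_key_Inl by auto
    next
      case (Inr z)
      then show ?thesis
        using y by (cases z) auto
    qed
  qed
  then have "card {y \<in> H_vertices V. y \<noteq> Inr (T, i) \<and> (H_plus E y (Inr (T, i)) \<longleftrightarrow> block_key y \<noteq> T)}
      \<le> card (Inl ` T :: ('a + 'a set \<times> nat) set)"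
    using assms finite_V by (intro card_mono) (auto intro: finite_subset)
  also have "\<dots> = 3"
    using assms by (simp add: card_image)
  finally show ?thesis .
qed

lemma tolerant_clustering_exists: "has_tolerant_clustering (H_vertices V) (H_plus E) (H_tol (card V))"
proof (rule has_tolerant_clustering_fibers[where f = block_key])
  fix v assume "v \<in> H_vertices V"
  then show "card {y \<in> H_vertices V. y \<noteq> v \<and> (H_plus E y v \<longleftrightarrow> block_key y \<noteq> block_key v)}
      \<le> H_tol (card V) v"
    using block_errors_Inl block_errors_Inr by (cases v) (auto simp: H_vertices_def)
qed

end

subsection \<open>Triangle partitions from tolerant clusterings\<close>

locale tolerant_clustering = four_regular_graph +
  fixes C :: "('a + 'a set \<times> nat) set set"
  assumes partition: "partition_on (H_vertices V) C"
    and tolerant: "\<And>v. v \<in> H_vertices V \<Longrightarrow> errors_at (H_vertices V) (H_plus E) C v \<le> H_tol (card V) v"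
begin

lemma cluster_subset: "K \<in> C \<Longrightarrow> K \<subseteq> H_vertices V"
  using partition unfolding partition_on_def by blast

lemma card_le_H_tol:
  assumes "K \<in> C" "v \<in> K" "A \<subseteq> {y \<in> H_vertices V. y \<noteq> v \<and> (H_plus E y v \<longleftrightarrow> y \<notin> K)}"
  shows "card A \<le> H_tol (card V) v"
proof -
  have "card A \<le> errors_at (H_vertices V) (H_plus E) C v"
    using finite_H_vertices[OF finite_V] partition assms by (rule card_le_errors_at)
  also have "\<dots> \<le> H_tol (card V) v"
    using tolerant cluster_subset[OF assms(1)] assms(2) by blast
  finally show ?thesis .
qed

lemma gadget_cluster_errors:
  assumes "K \<in> C" "Inr (T, i) \<in> K"
  shows "card (gadget T - K) + card (K - gadget T - Inl ` T) \<le> 3"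
proof -
  have "Inr (T, i) \<in> H_vertices V"
    using assms cluster_subset by blast
  then have T: "T \<subseteq> V" "card T = 3" "i < 7"
    by simp_all
  have "card (gadget T - K) + card (K - gadget T - Inl ` T) = card ((gadget T - K) \<union> (K - gadget T - Inl ` T))"
    using finite_subset[OF cluster_subset[OF assms(1)] finite_H_vertices[OF finite_V]]
    by (intro card_Un_disjoint[symmetric]) (auto simp: gadget_def)
  also have "\<dots> \<le> H_tol (card V) (Inr (T, i))"
  proof (rule card_le_H_tol[OF assms], intro subsetI CollectI conjI)
    fix y assume y: "y \<in> (gadget T - K) \<union> (K - gadget T - Inl ` T)"
    show "y \<in> H_vertices V"
      using y T cluster_subset[OF assms(1)] by (auto simp: gadget_def)
    then show "H_plus E y (Inr (T, i)) \<longleftrightarrow> y \<notin> K"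
      using y by (auto simp: H_plus_Inr_iff)
    show "y \<noteq> Inr (T, i)"
      using y assms(2) T(3) by (auto simp: gadget_def)
  qed
  finally show ?thesis
    by simp
qed

lemma gadget_cluster_majority:
  assumes "K \<in> C" "Inr (T, i) \<in> K"
  shows "4 \<le> card (gadget T \<inter> K)"
proof -
  have "card (gadget T) = card (gadget T \<inter> K) + card (gadget T - K)"
    by (rule card_Int_Diff) (simp add: gadget_def)
  then show ?thesis
    using gadget_cluster_errors[OF assms] card_gadget[of T] by linarith
qed

lemma cluster_unique_triple:
  assumes "K \<in> C" "Inr (T, i) \<in> K" "Inr (T', j) \<in> K"
  shows "T' = T"
proof (rule ccontr)
  assume "T' \<noteq> T"
  then have "gadget T' \<inter> K \<subseteq> K - gadget T - Inl ` T"
    by (auto simp: gadget_def)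
  then have "card (gadget T' \<inter> K) \<le> card (K - gadget T - Inl ` T)"
    using finite_subset[OF cluster_subset[OF assms(1)] finite_H_vertices[OF finite_V]]
    by (intro card_mono) auto
  then show False
    using gadget_cluster_errors[OF assms(1,2)] gadget_cluster_majority[OF assms(1,3)] by simp
qed

lemma cluster_plus_nbhd_Inl:
  assumes "K \<in> C" "Inl u \<in> K"
  shows "9 \<le> card ({y \<in> H_vertices V. H_plus E y (Inl u)} \<inter> K)"
proof -
  define N where "N = {y \<in> H_vertices V. H_plus E y (Inl u)}"
  have "Inl u \<in> H_vertices V"
    using assms cluster_subset by blast
  then have u: "u \<in> V"
    by simp
  have "finite N"
    unfolding N_def using finite_H_vertices[OF finite_V] by simp
  have "card (N - K) \<le> H_tol (card V) (Inl u)"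
    by (rule card_le_H_tol[OF assms]) (use E_irrefl in \<open>auto simp: N_def\<close>)
  then have "card (N - K) \<le> 7 * (card (triples u) - 1) + 2"
    by (simp only: H_tol_Inl[OF u])
  moreover have "card (N - K) + card (N \<inter> K) = 7 * card (triples u) + 4"
    using card_Int_Diff[OF \<open>finite N\<close>, of K] card_H_plus_nbhd_Inl[OF u] by (simp add: N_def)
  ultimately show ?thesis
    using card_triples_pos[OF u] unfolding N_def by linarith
qed

lemma vertex_cluster:
  assumes "K \<in> C" "Inl u \<in> K"
  obtains T i where "T \<in> triples u" "Inr (T, i) \<in> K" "2 \<le> card {w \<in> Inl -` K. E u w}"
proof -
  define N where "N = {y \<in> H_vertices V. H_plus E y (Inl u)}"
  have "Inl u \<in> H_vertices V"
    using assms cluster_subset by blast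
  then have u: "u \<in> V"
    by simp
  have big: "9 \<le> card (N \<inter> K)"
    unfolding N_def using assms by (rule cluster_plus_nbhd_Inl)
  have "\<exists>T\<in>triples u. gadget T \<inter> K \<noteq> {}"
  proof (rule ccontr)
    assume "\<not> ?thesis"
    then have "N \<inter> K \<subseteq> Inl ` {w \<in> V. E u w}"
      using H_plus_nbhd_Inl[OF u] by (auto simp: N_def)
    then have "card (N \<inter> K) \<le> card (Inl ` {w \<in> V. E u w} :: ('a + 'a set \<times> nat) set)"
      by (rule card_mono[rotated]) (simp add: finite_V)
    also have "\<dots> = 4"
      using degree[OF u] by (simp add: card_image)
    finally show False
      using big by simp
  qed
  then obtain T i where T: "T \<in> triples u" "Inr (T, i) \<in> K"
    by (auto simp: gadget_def)
  let ?S = "{w \<in> Inl -` K. E u w}"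
  have "N \<inter> K \<subseteq> gadget T \<union> Inl ` ?S"
    using H_plus_nbhd_Inl[OF u] cluster_unique_triple[OF assms(1) T(2)]
    by (fastforce simp: N_def gadget_def)
  moreover have "finite ?S"
    by (rule finite_subset[OF _ finite_V]) (auto dest: edge_vertices)
  ultimately have "card (N \<inter> K) \<le> card (gadget T \<union> Inl ` ?S)"
    by (intro card_mono) (simp_all add: gadget_def)
  also have "\<dots> \<le> card (gadget T) + card (Inl ` ?S :: ('a + 'a set \<times> nat) set)"
    by (rule card_Un_le)
  also have "\<dots> = 7 + card ?S"
    by (simp add: card_gadget card_image)
  finally have "2 \<le> card ?S"
    using big by linarith
  then show ?thesis
    using that T by simp
qed

lemma cluster_triangle:
  assumes "K \<in> C" "Inl u \<in> K"
  shows "card (Inl -` K) = 3 \<and> (\<forall>a\<in>Inl -` K. \<forall>b\<in>Inl -` K. a \<noteq> b \<longrightarrow> E a b)"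
proof -
  obtain T i where T: "T \<in> triples u" "Inr (T, i) \<in> K"
    using vertex_cluster[OF assms] .
  have "Inl -` K \<subseteq> T"
  proof
    fix w assume "w \<in> Inl -` K"
    then have "Inl w \<in> K"
      by simp
    then obtain T' j where "T' \<in> triples w" "Inr (T', j) \<in> K"
      by (rule vertex_cluster[OF assms(1)])
    then show "w \<in> T"
      using cluster_unique_triple[OF assms(1) T(2)] by (auto simp: triples_def)
  qed
  moreover have "card T \<le> Suc (card {x \<in> Inl -` K. E w x})" if "w \<in> Inl -` K" for w
  proof -
    have "Inl w \<in> K"
      using that by simp
    then have "2 \<le> card {x \<in> Inl -` K. E w x}"
      by (rule vertex_cluster[OF assms(1)])
    then show ?thesis
      using T(1) by (simp add: triples_def)
  qed
  moreover have "finite T"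
    using T(1) finite_V by (auto simp: triples_def intro: finite_subset)
  ultimately have "Inl -` K = T \<and> (\<forall>a\<in>Inl -` K. \<forall>b\<in>Inl -` K. a \<noteq> b \<longrightarrow> E a b)"
    using full_clique_if_min_degree[of T "Inl -` K" u E] assms(2) E_irrefl by blast
  then show ?thesis
    using T(1) by (simp add: triples_def)
qed

lemma triangle_partition_exists: "triangle_partition V E"
proof -
  let ?P = "(-`) Inl ` C - {{}}"
  have "partition_on (Inl -` H_vertices V) ?P"
    by (rule partition_on_vimage[OF partition])
  moreover have "Inl -` H_vertices V = V"
    by auto
  moreover have "card B = 3 \<and> (\<forall>x\<in>B. \<forall>y\<in>B. x \<noteq> y \<longrightarrow> E x y)" if B: "B \<in> ?P" for B
  proof -
    obtain K u where "K \<in> C" "B = Inl -` K" "u \<in> B"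
      using B by blast
    then show ?thesis
      using cluster_triangle by blast
  qed
  ultimately show ?thesis
    unfolding triangle_partition_def by (metis (no_types, lifting))
qed

end

theorem corollary1:
  fixes V :: "'a set" and E :: "'a \<Rightarrow> 'a \<Rightarrow> bool"
  assumes "finite V"
    and "\<And>u v. E u v \<Longrightarrow> u \<in> V \<and> v \<in> V"
    and "\<And>u v. E u v \<Longrightarrow> E v u"
    and "\<And>u. \<not> E u u"
    and "\<And>v. v \<in> V \<Longrightarrow> card {u \<in> V. E v u} = 4"
    and "card V \<ge> 7"
  shows "has_tolerant_clustering (H_vertices V) (H_plus E) (H_tol (card V))
           \<longleftrightarrow> triangle_partition V E"
proof -
  interpret four_regular_graph V E
    using assms(1-5) by unfold_locales
  show ?thesis
  proof
    assume "has_tolerant_clustering (H_vertices V) (H_plus E) (H_tol (card V))"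
    then obtain C where "partition_on (H_vertices V) C"
      and "\<forall>v\<in>H_vertices V. errors_at (H_vertices V) (H_plus E) C v \<le> H_tol (card V) v"
      unfolding has_tolerant_clustering_def by blast
    then interpret tolerant_clustering V E C
      by unfold_locales blast+
    show "triangle_partition V E"
      by (rule triangle_partition_exists)
  next
    assume "triangle_partition V E"
    then obtain P where "partition_on V P"
      and "\<forall>B\<in>P. card B = 3 \<and> (\<forall>x\<in>B. \<forall>y\<in>B. x \<noteq> y \<longrightarrow> E x y)"
      unfolding triangle_partition_def by blast
    then interpret triangle_partitioned V E P
      by unfold_locales blast+
    show "has_tolerant_clustering (H_vertices V) (H_plus E) (H_tol (card V))"
      by (rule tolerant_clustering_exists)
  qed
qed

end
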